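(* Let $(\Sigma(t),\beta(t))$ be a solution of Hamilton's equations $\frac{d}{dt}(\Sigma,\beta_\Sigma)=X_h(\Sigma,\beta_\Sigma)$ starting at a point of $\mathcal{R}_{1,0}$, and let $\Gamma(t)$ be the closed plane curve whose rotation about the vertical axis gives $\Sigma(t)$. Let $f(t,\rho)=(\xi(t,\rho),\eta(t,\rho))$ be the parametrization of $\Gamma(t)$ moving normally, $f_t=k_g\,n_\Gamma\circ f$ with $n_\Gamma$ the unit normal of $\Gamma$. Then $$\xi_t=\frac{\xi_\rho\eta_\rho}{\xi(\xi_\rho^2+\eta_\rho^2)},\qquad \eta_t=-\frac{\xi_\rho^2}{\xi(\xi_\rho^2+\eta_\rho^2)},$$ and the vorticity density $\beta(t)=\zeta_\rho d\rho$ evolves by $$\zeta_t=-\frac{\eta_\rho\zeta_\rho}{\xi(\xi_\rho^2+\eta_\rho^2)}.$$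
   Context: Setting: $\mu$ Euclidean volume form on $\mathbb{R}^3$, $d\nu=\mu$, $a>0$; $S$ compact oriented surface with closed nowhere-vanishing 1-form $\beta$ with period group $\ell\mathbb{Z}$; $\mathrm{Gr}_a^{S,\beta}$ the set of pairs $(\Sigma,\beta_\Sigma)$ ($\Sigma\subset\mathbb{R}^3$ oriented embedded surface, $\int_\Sigma\nu=a$, orientation-preserving $\Psi:S\to\Sigma$ with $\Psi^*\beta_\Sigma=\beta$). Vortex lines are fibers of $b_\Sigma:\Sigma\to\mathbb{R}/\ell\mathbb{Z}$ with $\beta_\Sigma=b_\Sigma^*\vartheta_\ell$. Darboux frame $\{T,n_g,n\}$ of vortex lines: $n$ unit normal of $\Sigma$ compatible with orientations, $T$ unit tangent, $n_g=n\times T$, oriented so $\beta_\Sigma(n_g)>0$; $kN=k_gn_g+k_nn$ is the curvature vector of a vortex line. Tangent vectors at $(\Sigma,\beta_\Sigma)$ are pairs (normal velocity $\rho\in C^\infty(\Sigma)$ with $\int\rho\,\mu_\Sigma=0$, $\mu_\Sigma=i_n\mu$; exact variation $d\lambda$ of $\beta_\Sigma$), and the Hamiltonian vector field of $h=\int_{\mathbb{T}_\ell}\mathrm{length}(C_z)\vartheta_\ell$ is $X_h=(k_g,-d(k_n\beta_\Sigma(n_g)))$. $\mathcal{R}_{1,0}$ consists of the $(\Sigma,\beta_\Sigma)$ where $\Sigma$ is the surface of revolution $(\xi(\rho)\cos\theta,\xi(\rho)\sin\theta,\eta(\rho))$, $\xi>0$, $\rho,\theta\in\mathbb{R}/2\pi\mathbb{Z}$,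 obtained by rotating the closed plane curve $\Gamma=(\xi,\eta)$ about the vertical axis, oriented so that $n=(\xi_\rho^2+\eta_\rho^2)^{-1/2}(-\eta_\rho\cos\theta,-\eta_\rho\sin\theta,\xi_\rho)$, and $\beta_\Sigma=\zeta_\rho d\rho$ with $\zeta_\rho>0$ and $\zeta(\rho+2\pi)=\zeta(\rho)+\ell$ (vortex lines are the parallel circles). Then $k_g=-\xi_\rho/(\xi\sqrt{\xi_\rho^2+\eta_\rho^2})$, $k_n=\eta_\rho/(\xi\sqrt{\xi_\rho^2+\eta_\rho^2})$. *)

theory Defs
  imports "HOL-Analysis.Analysis"
begin

text \<open>
  A time-dependent point of R_{1,0} is
  described by profile functions xi, eta, zeta :: real => real => real, written
  xi t rho etc.  The surface Sigma(t) is
     F(t,rho,theta) = (xi cos theta, xi sin theta, eta),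
  obtained by rotating the closed plane curve Gamma(t) = f(t,.) = (xi(t,.), eta(t,.))
  about the vertical axis, and beta(t) = zeta_rho d rho.
\<close>

definition pd_rho :: "(real \<Rightarrow> real \<Rightarrow> real) \<Rightarrow> real \<Rightarrow> real \<Rightarrow> real" where
  "pd_rho g t r = deriv (\<lambda>r'. g t r') r"

definition pd_t :: "(real \<Rightarrow> real \<Rightarrow> real) \<Rightarrow> real \<Rightarrow> real \<Rightarrow> real" where
  "pd_t g t r = deriv (\<lambda>s. g s r) t"

definition speed2 :: "(real \<Rightarrow> real \<Rightarrow> real) \<Rightarrow> (real \<Rightarrow> real \<Rightarrow> real) \<Rightarrow> real \<Rightarrow> real \<Rightarrow> real" where
  "speed2 xi eta t r = (pd_rho xi t r)\<^sup>2 + (pd_rho eta t r)\<^sup>2"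

text \<open>geodesic and normal curvature of the vortex lines (parallel circles), as in the setting\<close>
definition geod_curv :: "(real \<Rightarrow> real \<Rightarrow> real) \<Rightarrow> (real \<Rightarrow> real \<Rightarrow> real) \<Rightarrow> real \<Rightarrow> real \<Rightarrow> real" where
  "geod_curv xi eta t r = - pd_rho xi t r / (xi t r * sqrt (speed2 xi eta t r))"

definition norm_curv :: "(real \<Rightarrow> real \<Rightarrow> real) \<Rightarrow> (real \<Rightarrow> real \<Rightarrow> real) \<Rightarrow> real \<Rightarrow> real \<Rightarrow> real" where
  "norm_curv xi eta t r = pd_rho eta t r / (xi t r * sqrt (speed2 xi eta t r))"

definition profile_normal :: "(real \<Rightarrow> real \<Rightarrow> real) \<Rightarrow> (real \<Rightarrow> real \<Rightarrow> real) \<Rightarrow> real \<Rightarrow> real \<Rightarrow> real \<times> real" where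
  "profile_normal xi eta t r =
     (- pd_rho eta t r / sqrt (speed2 xi eta t r), pd_rho xi t r / sqrt (speed2 xi eta t r))"

definition surf_normal :: "(real \<Rightarrow> real \<Rightarrow> real) \<Rightarrow> (real \<Rightarrow> real \<Rightarrow> real) \<Rightarrow> real \<Rightarrow> real \<Rightarrow> real \<Rightarrow> real^3" where
  "surf_normal xi eta t r \<theta> =
     vector [- pd_rho eta t r * cos \<theta> / sqrt (speed2 xi eta t r),
             - pd_rho eta t r * sin \<theta> / sqrt (speed2 xi eta t r),
               pd_rho xi t r / sqrt (speed2 xi eta t r)]"

definition surf_drho :: "(real \<Rightarrow> real \<Rightarrow> real) \<Rightarrow> (real \<Rightarrow> real \<Rightarrow> real) \<Rightarrow> real \<Rightarrow> real \<Rightarrow> real \<Rightarrow> real^3" where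
  "surf_drho xi eta t r \<theta> = vector [pd_rho xi t r * cos \<theta>, pd_rho xi t r * sin \<theta>, pd_rho eta t r]"

text \<open>value of beta_Sigma = zeta_rho d rho on a tangent vector v at F(t,rho,theta).
  Since F_rho and F_theta are orthogonal, d rho (v) = (v . F_rho) / |F_rho|^2.\<close>
definition beta_on :: "(real \<Rightarrow> real \<Rightarrow> real) \<Rightarrow> (real \<Rightarrow> real \<Rightarrow> real) \<Rightarrow> (real \<Rightarrow> real \<Rightarrow> real)
    \<Rightarrow> real \<Rightarrow> real \<Rightarrow> real \<Rightarrow> real^3 \<Rightarrow> real" where
  "beta_on xi eta zeta t r \<theta> v =
     pd_rho zeta t r * ((v \<bullet> surf_drho xi eta t r \<theta>) / (surf_drho xi eta t r \<theta> \<bullet> surf_drho xi eta t r \<theta>))"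

definition par_tangent :: "real \<Rightarrow> real^3" where
  "par_tangent \<theta> = vector [- sin \<theta>, cos \<theta>, 0]"

definition darboux_T :: "(real \<Rightarrow> real \<Rightarrow> real) \<Rightarrow> (real \<Rightarrow> real \<Rightarrow> real) \<Rightarrow> (real \<Rightarrow> real \<Rightarrow> real)
    \<Rightarrow> real \<Rightarrow> real \<Rightarrow> real \<Rightarrow> real^3" where
  "darboux_T xi eta zeta t r \<theta> =
     (if beta_on xi eta zeta t r \<theta> (cross3 (surf_normal xi eta t r \<theta>) (par_tangent \<theta>)) > 0
      then par_tangent \<theta> else - par_tangent \<theta>)"

definition darboux_ng :: "(real \<Rightarrow> real \<Rightarrow> real) \<Rightarrow> (real \<Rightarrow> real \<Rightarrow> real) \<Rightarrow> (real \<Rightarrow> real \<Rightarrow> real)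
    \<Rightarrow> real \<Rightarrow> real \<Rightarrow> real \<Rightarrow> real^3" where
  "darboux_ng xi eta zeta t r \<theta> = cross3 (surf_normal xi eta t r \<theta>) (darboux_T xi eta zeta t r \<theta>)"

text \<open>the function lambda = - k_n beta_Sigma(n_g) whose differential is the beta-component of X_h\<close>
definition ham_pot :: "(real \<Rightarrow> real \<Rightarrow> real) \<Rightarrow> (real \<Rightarrow> real \<Rightarrow> real) \<Rightarrow> (real \<Rightarrow> real \<Rightarrow> real)
    \<Rightarrow> real \<Rightarrow> real \<Rightarrow> real \<Rightarrow> real" where
  "ham_pot xi eta zeta t r \<theta> =
     - norm_curv xi eta t r * beta_on xi eta zeta t r \<theta> (darboux_ng xi eta zeta t r \<theta>)"

end

theory Submission
  imports Defs
begin

(*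
  The vortex lines of a surface of revolution are its parallel circles, so the Darboux frame
  is explicit: with F_rho the coordinate tangent, the sign condition beta(n_g) > 0 forces
  T = - par_tangent, hence n_g = F_rho / |F_rho| and beta(n_g) = zeta_rho / |F_rho|.  The
  potential lambda = - k_n beta(n_g) is therefore - eta_rho zeta_rho / (xi |F_rho|^2),
  independent of theta, and the beta-component of Hamilton's equations says zeta_t is its
  rho-derivative.  The profile equations are k_g n_Gamma written out.  The argument is
  pointwise: of the hypotheses on the data only regularity and zeta_rho > 0 are used.
*)

lemma surf_drho_inner_self:
  "surf_drho xi eta t r \<theta> \<bullet> surf_drho xi eta t r \<theta> = speed2 xi eta t r"
proof -
  have "surf_drho xi eta t r \<theta> \<bullet> surf_drho xi eta t r \<theta> =
      pd_rho xi t r * cos \<theta> * (pd_rho xi t r * cos \<theta>)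
      + pd_rho xi t r * sin \<theta> * (pd_rho xi t r * sin \<theta>) + pd_rho eta t r * pd_rho eta t r"
    by (simp add: surf_drho_def inner_vec_def sum_3)
  also have "\<dots> = (pd_rho xi t r)\<^sup>2 * ((sin \<theta>)\<^sup>2 + (cos \<theta>)\<^sup>2) + (pd_rho eta t r)\<^sup>2"
    by algebra
  finally show ?thesis
    by (simp add: speed2_def)
qed

lemma surf_normal_cross_par_tangent:
  "cross3 (surf_normal xi eta t r \<theta>) (par_tangent \<theta>) =
     - (1 / sqrt (speed2 xi eta t r)) *\<^sub>R surf_drho xi eta t r \<theta>"
proof -
  have normal: "surf_normal xi eta t r \<theta> = (1 / sqrt (speed2 xi eta t r)) *\<^sub>R
      vector [- pd_rho eta t r * cos \<theta>, - pd_rho eta t r * sin \<theta>, pd_rho xi t r]"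
    by (simp add: surf_normal_def vec_eq_iff forall_3)
  have "cross3 (vector [- pd_rho eta t r * cos \<theta>, - pd_rho eta t r * sin \<theta>, pd_rho xi t r])
      (par_tangent \<theta>) = - surf_drho xi eta t r \<theta>"
  proof -
    have "cos \<theta> * (cos \<theta> * pd_rho eta t r) + sin \<theta> * (sin \<theta> * pd_rho eta t r) =
        pd_rho eta t r * ((sin \<theta>)\<^sup>2 + (cos \<theta>)\<^sup>2)"
      by algebra
    then show ?thesis
      by (simp add: par_tangent_def surf_drho_def cross3_def vec_eq_iff forall_3
          algebra_simps power2_eq_square)
  qed
  then show ?thesis
    by (simp add: normal cross_mult_left)
qed

lemma beta_on_scaleR_surf_drho:
  assumes "speed2 xi eta t r \<noteq> 0"
  shows "beta_on xi eta zeta t r \<theta> (c *\<^sub>R surf_drho xi eta t r \<theta>) = c * pd_rho zeta t r"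
  using assms by (simp add: beta_on_def surf_drho_inner_self)

lemma darboux_T_eq:
  assumes "speed2 xi eta t r > 0" and "pd_rho zeta t r > 0"
  shows "darboux_T xi eta zeta t r \<theta> = - par_tangent \<theta>"
proof -
  have "beta_on xi eta zeta t r \<theta> (cross3 (surf_normal xi eta t r \<theta>) (par_tangent \<theta>)) < 0"
    using assms by (simp add: surf_normal_cross_par_tangent beta_on_scaleR_surf_drho
      flip: scaleR_minus_left)
  then show ?thesis by (simp add: darboux_T_def)
qed

lemma darboux_ng_eq:
  assumes "speed2 xi eta t r > 0" and "pd_rho zeta t r > 0"
  shows "darboux_ng xi eta zeta t r \<theta> = (1 / sqrt (speed2 xi eta t r)) *\<^sub>R surf_drho xi eta t r \<theta>"
  using assms by (simp add: darboux_ng_def darboux_T_eq surf_normal_cross_par_tangent)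

lemma ham_pot_eq:
  assumes "speed2 xi eta t r > 0" and "pd_rho zeta t r > 0"
  shows "ham_pot xi eta zeta t r \<theta> =
     - pd_rho eta t r * pd_rho zeta t r / (xi t r * speed2 xi eta t r)"
proof -
  have "ham_pot xi eta zeta t r \<theta> =
      - pd_rho eta t r * pd_rho zeta t r / (xi t r * (sqrt (speed2 xi eta t r))\<^sup>2)"
    using assms
    by (simp add: ham_pot_def darboux_ng_eq beta_on_scaleR_surf_drho norm_curv_def power2_eq_square)
  then show ?thesis
    using assms by simp
qed

lemma geod_curv_scaleR_profile_normal:
  "geod_curv xi eta t r *\<^sub>R profile_normal xi eta t r =
     (pd_rho xi t r * pd_rho eta t r / (xi t r * speed2 xi eta t r),
      - (pd_rho xi t r)\<^sup>2 / (xi t r * speed2 xi eta t r))"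
proof -
  have "(sqrt (speed2 xi eta t r))\<^sup>2 = speed2 xi eta t r"
    by (simp add: speed2_def)
  then show ?thesis
    by (simp add: geod_curv_def profile_normal_def power2_eq_square)
qed

theorem theorem3p10:
  fixes \<xi> \<eta> \<zeta> :: "real \<Rightarrow> real \<Rightarrow> real" and J :: "real set" and ell :: real
  assumes J: "open J" "is_interval J" "0 \<in> J"
    and l_pos: "ell > 0"
    and smooth: "\<And>t r. t \<in> J \<Longrightarrow>
        (\<lambda>r'. \<xi> t r') differentiable (at r) \<and> (\<lambda>r'. \<eta> t r') differentiable (at r) \<and>
        (\<lambda>r'. \<zeta> t r') differentiable (at r) \<and>
        (\<lambda>s. \<xi> s r) differentiable (at t) \<and> (\<lambda>s. \<eta> s r) differentiable (at t) \<and>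
        (\<lambda>s. \<zeta> s r) differentiable (at t) \<and> (\<lambda>s. pd_rho \<zeta> s r) differentiable (at t)"
    and xi_pos: "\<And>t r. t \<in> J \<Longrightarrow> \<xi> t r > 0"
    and regular: "\<And>t r. t \<in> J \<Longrightarrow> speed2 \<xi> \<eta> t r > 0"
    and periodic: "\<And>t r. t \<in> J \<Longrightarrow>
        \<xi> t (r + 2 * pi) = \<xi> t r \<and> \<eta> t (r + 2 * pi) = \<eta> t r \<and> \<zeta> t (r + 2 * pi) = \<zeta> t r + ell"
    and embedded: "\<And>t. t \<in> J \<Longrightarrow> inj_on (\<lambda>r. (\<xi> t r, \<eta> t r)) {0..<2 * pi}"
    and zeta_incr: "\<And>t r. t \<in> J \<Longrightarrow> pd_rho \<zeta> t r > 0"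
    \<comment> \<open>Hamilton's equations, first component: the profile moves normally with normal velocity k_g\<close>
    and ham_normal: "\<And>t r. t \<in> J \<Longrightarrow>
        (pd_t \<xi> t r, pd_t \<eta> t r) = geod_curv \<xi> \<eta> t r *\<^sub>R profile_normal \<xi> \<eta> t r"
    \<comment> \<open>Hamilton's equations, second component: d/dt beta = d lambda, lambda = - k_n beta(n_g)\<close>
    and ham_beta: "\<And>t r \<theta>. t \<in> J \<Longrightarrow>
        pd_t (pd_rho \<zeta>) t r = deriv (\<lambda>r'. ham_pot \<xi> \<eta> \<zeta> t r' \<theta>) r \<and>
        0 = deriv (\<lambda>\<theta>'. ham_pot \<xi> \<eta> \<zeta> t r \<theta>') \<theta>"
  shows "\<forall>t\<in>J. \<forall>r.
      pd_t \<xi> t r = pd_rho \<xi> t r * pd_rho \<eta> t r / (\<xi> t r * speed2 \<xi> \<eta> t r) \<and>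
      pd_t \<eta> t r = - (pd_rho \<xi> t r)\<^sup>2 / (\<xi> t r * speed2 \<xi> \<eta> t r) \<and>
      pd_t (pd_rho \<zeta>) t r =
        pd_rho (\<lambda>s r'. - pd_rho \<eta> s r' * pd_rho \<zeta> s r' / (\<xi> s r' * speed2 \<xi> \<eta> s r')) t r"
proof (intro ballI allI)
  fix t r
  assume t: "t \<in> J"
  have profile: "(pd_t \<xi> t r, pd_t \<eta> t r) =
      (pd_rho \<xi> t r * pd_rho \<eta> t r / (\<xi> t r * speed2 \<xi> \<eta> t r),
       - (pd_rho \<xi> t r)\<^sup>2 / (\<xi> t r * speed2 \<xi> \<eta> t r))"
    using ham_normal[OF t] by (simp add: geod_curv_scaleR_profile_normal)
  have potential: "(\<lambda>r'. ham_pot \<xi> \<eta> \<zeta> t r' 0) =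
      (\<lambda>r'. - pd_rho \<eta> t r' * pd_rho \<zeta> t r' / (\<xi> t r' * speed2 \<xi> \<eta> t r'))"
    using ham_pot_eq regular[OF t] zeta_incr[OF t] by blast
  show "pd_t \<xi> t r = pd_rho \<xi> t r * pd_rho \<eta> t r / (\<xi> t r * speed2 \<xi> \<eta> t r) \<and>
      pd_t \<eta> t r = - (pd_rho \<xi> t r)\<^sup>2 / (\<xi> t r * speed2 \<xi> \<eta> t r) \<and>
      pd_t (pd_rho \<zeta>) t r =
        pd_rho (\<lambda>s r'. - pd_rho \<eta> s r' * pd_rho \<zeta> s r' / (\<xi> s r' * speed2 \<xi> \<eta> s r')) t r"
    using profile ham_beta[OF t, of r 0] potential by (simp add: pd_rho_def)
qed

end
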